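(* Let $(G,\mathcal{A})$ be a local convergence pairing on $X$ and $A,B\in\mathcal{A}$. If $(f_i)\subset\mathrm{Stab}(A)\cap\mathrm{Stab}(B)$ acts as a convergence sequence on both $A$ and $B$, with $p$ the attractor of $(f_i)$ both in its action on $A$ and in its action on $B$, then the repeller $n$ of $(f_i)$ in its action on $A$ is also the repeller of $(f_i)$ in its action on $B$.
   Context: $X$ is a Peano continuum (compact, connected, locally connected metric space) without cut points and $G$ acts on $X$ by homeomorphisms; $\mathcal{A}$ is a $G$-invariant collection of closed subsets of $X$; $\mathrm{Stab}(A)=\{g\in G:g(A)=A\}$. For a closed $S\subset X$ and connected $B,C\subset X\setminus S$, $S$ separates $B$ from $C$ if they lie in different components of $X\setminus S$; $S$ separates $Y$ if it separates two points of $Y$. Closed sets $A,B$ cross if $A\cap B\neq\emptyset$ or ($A$ separates $B$ and $B$ separates $A$). A crossing sequence is $A_1,\dots,A_n$ with $A_i$ crossing $A_{i+1}$ for $1\le i<n$. $g_i(S)\to p$ means every neighborhood of $p$ contains $g_i(S)$ for all large $i$. A sequence of homeomorphisms $(g_i)$ of $Y$ is a convergence sequence on $Y$ with repeller $n$ and attractor $p$ if $g_i(C)\to p$ for every compact $C\subset Y\setminus\{n\}$. A group acts as a convergence group on $Y$ if every sequence of distinct elements has a subsequence that is a convergence sequence on $Y$. $(G,\mathcal{A})$ is a local convergence pairing on $X$ if: (1) $|A|>2$ for all $A\in\mathcal{A}$; (2) for each $\epsilon>0$ only finitely many $A\in\mathcal{A}$ have diameter $>\epsilon$; (3) for any $x,y\in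 X$ some finite $\mathcal{B}\subset\mathcal{A}$ has $\bigcup\mathcal{B}$ separating $x$ from $y$; (4) each $\mathrm{Stab}(A)$ acts as a convergence group on $A$; (5) for any $A,B\in\mathcal{A}$ with $|A\cap B|\le 2$: if $A\cap B=\{c\}$ then for any $b\in B\setminus\{c\}$ there is a finite crossing sequence $A,A_1,\dots,A_n,B$ in $\mathcal{A}$ with $\{b,c\}\cap A_i=\emptyset$ for $1\le i\le n$; if $|A\cap B|\ne1$ there is a crossing sequence $A,A_1,\dots,A_n,B$ in $\mathcal{A}$ with $(A\cap B)\cap A_i=\emptyset$ for $1\le i\le n$. *)

theory Defs
  imports "HOL-Analysis.Analysis" "HOL-Algebra.Group_Action"
begin

definition peano_continuum :: "'a::metric_space set \<Rightarrow> bool" where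
  "peano_continuum X \<longleftrightarrow> X \<noteq> {} \<and> compact X \<and> connected X \<and> locally connected X"

definition no_cut_points :: "'a::metric_space set \<Rightarrow> bool" where
  "no_cut_points X \<longleftrightarrow> (\<forall>x\<in>X. connected (X - {x}))"

definition acts_by_homeos :: "('g, 'c) monoid_scheme \<Rightarrow> ('g \<Rightarrow> 'a::metric_space \<Rightarrow> 'a) \<Rightarrow> 'a set \<Rightarrow> bool" where
  "acts_by_homeos G \<phi> X \<longleftrightarrow> group_action G X \<phi> \<and>
     (\<forall>g\<in>carrier G. homeomorphism X X (\<phi> g) (\<phi> (inv\<^bsub>G\<^esub> g)))"

definition Stab :: "('g, 'c) monoid_scheme \<Rightarrow> ('g \<Rightarrow> 'a \<Rightarrow> 'a) \<Rightarrow> 'a set \<Rightarrow> 'g set" where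
  "Stab G \<phi> A = {g \<in> carrier G. \<phi> g ` A = A}"

definition separates_pts :: "'a::metric_space set \<Rightarrow> 'a set \<Rightarrow> 'a \<Rightarrow> 'a \<Rightarrow> bool" where
  "separates_pts X S x y \<longleftrightarrow> x \<in> X - S \<and> y \<in> X - S \<and> \<not> connected_component (X - S) x y"

definition separates_set :: "'a::metric_space set \<Rightarrow> 'a set \<Rightarrow> 'a set \<Rightarrow> bool" where
  "separates_set X S Y \<longleftrightarrow> (\<exists>x\<in>Y. \<exists>y\<in>Y. separates_pts X S x y)"

definition crosses :: "'a::metric_space set \<Rightarrow> 'a set \<Rightarrow> 'a set \<Rightarrow> bool" where
  "crosses X A B \<longleftrightarrow> A \<inter> B \<noteq> {} \<or> (separates_set X A B \<and> separates_set X B A)"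

definition crossing_list :: "'a::metric_space set \<Rightarrow> 'a set list \<Rightarrow> bool" where
  "crossing_list X L \<longleftrightarrow> (\<forall>i. Suc i < length L \<longrightarrow> crosses X (L ! i) (L ! Suc i))"

definition crossing_seq_avoiding ::
  "'a::metric_space set \<Rightarrow> 'a set set \<Rightarrow> 'a set \<Rightarrow> 'a set \<Rightarrow> 'a set \<Rightarrow> bool" where
  "crossing_seq_avoiding X \<A> A B Z \<longleftrightarrow>
     (\<exists>L. L \<noteq> [] \<and> set L \<subseteq> \<A> \<and> (\<forall>D\<in>set L. D \<inter> Z = {}) \<and> crossing_list X (A # L @ [B]))"

definition sets_tendsto :: "(nat \<Rightarrow> 'a::topological_space set) \<Rightarrow> 'a \<Rightarrow> bool" where
  "sets_tendsto S p \<longleftrightarrow> (\<forall>U. open U \<and> p \<in> U \<longrightarrow> (\<forall>\<^sub>F i in sequentially. S i \<subseteq> U))"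

definition convergence_seq :: "'a::metric_space set \<Rightarrow> (nat \<Rightarrow> 'a \<Rightarrow> 'a) \<Rightarrow> 'a \<Rightarrow> 'a \<Rightarrow> bool" where
  "convergence_seq Y g n p \<longleftrightarrow> n \<in> Y \<and> p \<in> Y \<and> (\<forall>i. \<exists>h. homeomorphism Y Y (g i) h) \<and>
     (\<forall>C. compact C \<and> C \<subseteq> Y - {n} \<longrightarrow> sets_tendsto (\<lambda>i. g i ` C) p)"

definition convergence_group_on ::
  "'g set \<Rightarrow> ('g \<Rightarrow> 'a::metric_space \<Rightarrow> 'a) \<Rightarrow> 'a set \<Rightarrow> bool" where
  "convergence_group_on H \<phi> Y \<longleftrightarrow>
     (\<forall>s::nat \<Rightarrow> 'g. range s \<subseteq> H \<and> inj s \<longrightarrow>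
        (\<exists>r n p. strict_mono r \<and> convergence_seq Y (\<lambda>i. \<phi> (s (r i))) n p))"

definition local_convergence_pairing ::
  "'a::metric_space set \<Rightarrow> ('g, 'c) monoid_scheme \<Rightarrow> ('g \<Rightarrow> 'a \<Rightarrow> 'a) \<Rightarrow> 'a set set \<Rightarrow> bool" where
  "local_convergence_pairing X G \<phi> \<A> \<longleftrightarrow>
     peano_continuum X \<and> no_cut_points X \<and> acts_by_homeos G \<phi> X \<and>
     (\<forall>A\<in>\<A>. closed A \<and> A \<subseteq> X) \<and>
     (\<forall>g\<in>carrier G. \<forall>A\<in>\<A>. \<phi> g ` A \<in> \<A>) \<and>
     (\<forall>A\<in>\<A>. infinite A \<or> card A > 2) \<and>
     (\<forall>\<epsilon>>0. finite {A\<in>\<A>. diameter A > \<epsilon>}) \<and>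
     (\<forall>x\<in>X. \<forall>y\<in>X. x \<noteq> y \<longrightarrow> (\<exists>\<B>. \<B> \<subseteq> \<A> \<and> finite \<B> \<and> separates_pts X (\<Union>\<B>) x y)) \<and>
     (\<forall>A\<in>\<A>. convergence_group_on (Stab G \<phi> A) \<phi> A) \<and>
     (\<forall>A\<in>\<A>. \<forall>B\<in>\<A>. finite (A \<inter> B) \<and> card (A \<inter> B) \<le> 2 \<longrightarrow>
        (\<forall>c. A \<inter> B = {c} \<longrightarrow> (\<forall>b\<in>B - {c}. crossing_seq_avoiding X \<A> A B {b, c})) \<and>
        (card (A \<inter> B) \<noteq> 1 \<longrightarrow> crossing_seq_avoiding X \<A> A B (A \<inter> B)))"

end

theory Submission
  imports Defs
begin

text \<open>If \<open>A\<close> and \<open>B\<close> share a point \<open>y \<noteq> p\<close>, the inverses \<open>f\<^sub>i\<^sup>-\<^sup>1\<close> carry \<open>y\<close> both to the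
  repeller \<open>n\<close> of the action on \<open>A\<close> and to the repeller \<open>m\<close> of the action on \<open>B\<close>, so \<open>n = m\<close>.
  Otherwise \<open>A \<inter> B = {p}\<close>, and it suffices to show \<open>n \<in> B\<close> (and symmetrically \<open>m \<in> A\<close>).
  The inverses \<open>g\<^sub>i\<close> fix \<open>p\<close> and converge on \<open>A\<close> with attractor \<open>n\<close>. Along a crossing
  chain \<open>A, L\<^sub>1, \<dots>, L\<^sub>k, B\<close> avoiding \<open>p\<close>, each \<open>g\<^sub>i(L\<^sub>j)\<close> meets or separates
  \<open>g\<^sub>i(L\<^sub>j\<^sub>-\<^sub>1)\<close>, which shrinks to \<open>n\<close>; as only finitely many members of \<open>\<A>\<close> are large,
  \<open>g\<^sub>i(L\<^sub>j)\<close> shrinks to \<open>n\<close> as well, unless along a subsequence it is a constant member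
  \<open>E \<ni> n\<close>. That case is absurd: renormalising gives a convergence sequence stabilising \<open>A\<close> and
  \<open>E\<close>, with repeller \<open>n\<close> where \<open>A \<inter> E = {n}\<close>, and fixing its attractor \<open>p \<notin> E\<close>; the same
  propagation along a chain from \<open>A\<close> to \<open>E\<close> would put \<open>p\<close> into \<open>E\<close>. Finally \<open>B\<close> meets
  or separates \<open>g\<^sub>i(L\<^sub>k) \<rightarrow> n\<close>, so the closed set \<open>B\<close> contains \<open>n\<close>.\<close>

section \<open>Actions by homeomorphisms\<close>

lemma acts_by_homeos_homeomorphism:
  "acts_by_homeos G \<phi> X \<Longrightarrow> g \<in> carrier G \<Longrightarrow> homeomorphism X X (\<phi> g) (\<phi> (inv\<^bsub>G\<^esub> g))"
  unfolding acts_by_homeos_def by simp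

lemma acts_by_homeos_group: "acts_by_homeos G \<phi> X \<Longrightarrow> group G"
  unfolding acts_by_homeos_def group_action_def group_hom_def by blast

lemma acts_by_homeos_mult:
  "acts_by_homeos G \<phi> X \<Longrightarrow> g \<in> carrier G \<Longrightarrow> h \<in> carrier G \<Longrightarrow> x \<in> X \<Longrightarrow>
    \<phi> (g \<otimes>\<^bsub>G\<^esub> h) x = \<phi> g (\<phi> h x)"
  unfolding acts_by_homeos_def by (metis group_action.composition_rule)

lemma acts_by_homeos_inv_image:
  "acts_by_homeos G \<phi> X \<Longrightarrow> g \<in> carrier G \<Longrightarrow> D \<subseteq> X \<Longrightarrow> \<phi> (inv\<^bsub>G\<^esub> g) ` \<phi> g ` D = D"
  using homeomorphism_apply1[OF acts_by_homeos_homeomorphism] by (force simp: image_image)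

lemma acts_by_homeos_inv_fixed:
  "acts_by_homeos G \<phi> X \<Longrightarrow> g \<in> carrier G \<Longrightarrow> x \<in> X \<Longrightarrow> \<phi> g x = x \<Longrightarrow> \<phi> (inv\<^bsub>G\<^esub> g) x = x"
  by (metis acts_by_homeos_homeomorphism homeomorphism_apply1)

lemma acts_by_homeos_fixed_notin_image:
  assumes "acts_by_homeos G \<phi> X" "g \<in> carrier G" "D \<subseteq> X" "x \<in> X" "\<phi> g x = x" "x \<notin> D"
  shows "x \<notin> \<phi> g ` D"
proof -
  have "inj_on (\<phi> g) X"
    using homeomorphism_apply1[OF acts_by_homeos_homeomorphism[OF assms(1,2)]] by (metis inj_onI)
  then show ?thesis using assms(3-) by (metis inj_on_image_mem_iff)
qed

lemma Stab_homeomorphism: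
  assumes "acts_by_homeos G \<phi> X" "A \<subseteq> X" "g \<in> Stab G \<phi> A"
  shows "homeomorphism A A (\<phi> g) (\<phi> (inv\<^bsub>G\<^esub> g))"
proof -
  have "g \<in> carrier G" "\<phi> g ` A = A" using assms(3) unfolding Stab_def by auto
  then show ?thesis
    using homeomorphism_of_subsets[OF acts_by_homeos_homeomorphism[OF assms(1)]] assms(2) by blast
qed

lemma Stab_inv_closed:
  assumes "acts_by_homeos G \<phi> X" "A \<subseteq> X" "g \<in> Stab G \<phi> A"
  shows "inv\<^bsub>G\<^esub> g \<in> Stab G \<phi> A"
proof -
  have "g \<in> carrier G" using assms(3) unfolding Stab_def by blast
  then show ?thesis
    using group.inv_closed[OF acts_by_homeos_group[OF assms(1)]]
      homeomorphism_image2[OF Stab_homeomorphism[OF assms]] unfolding Stab_def by blast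
qed

lemma Stab_mult_closed:
  assumes "acts_by_homeos G \<phi> X" "A \<subseteq> X" "g \<in> Stab G \<phi> A" "h \<in> Stab G \<phi> A"
  shows "g \<otimes>\<^bsub>G\<^esub> h \<in> Stab G \<phi> A"
proof -
  have gh: "g \<in> carrier G" "h \<in> carrier G" using assms(3,4) unfolding Stab_def by auto
  then have "\<phi> (g \<otimes>\<^bsub>G\<^esub> h) ` A = \<phi> g ` \<phi> h ` A"
    using acts_by_homeos_mult[OF assms(1)] assms(2) by (force simp: image_image)
  then show ?thesis
    using assms gh monoid.m_closed[OF group.is_monoid[OF acts_by_homeos_group[OF assms(1)]]]
    unfolding Stab_def by auto
qed

section \<open>Separation\<close>

lemma separates_pts_homeomorphism:
  assumes f: "homeomorphism X X f f'" and "S \<subseteq> X" and sep: "separates_pts X S w z"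
  shows "separates_pts X (f ` S) (f w) (f z)"
proof -
  have "inj_on f X" using homeomorphism_apply1[OF f] by (metis inj_onI)
  then have img: "f ` (X - S) = X - f ` S"
    using inj_on_image_set_diff[OF _ Diff_subset \<open>S \<subseteq> X\<close>] homeomorphism_image1[OF f] by metis
  have hom: "homeomorphism (X - S) (X - f ` S) f f'"
    using homeomorphism_of_subsets[OF f Diff_subset Diff_subset img] .
  have "w \<in> X - S" "z \<in> X - S" "\<not> connected_component (X - S) w z"
    using sep unfolding separates_pts_def by auto
  then show ?thesis
    using img connected_component_homeomorphism_iff[OF hom, of w z]
    unfolding separates_pts_def by auto
qed

text \<open>One half of \<^const>\<open>crosses\<close>; it is the only half that propagation along a crossing chain
  uses.\<close>
definition meets_or_separates :: "'a::metric_space set \<Rightarrow> 'a set \<Rightarrow> 'a set \<Rightarrow> bool" where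
  "meets_or_separates X S T \<longleftrightarrow> S \<inter> T \<noteq> {} \<or> separates_set X S T"

lemma crosses_meets_or_separates: "crosses X S T \<Longrightarrow> meets_or_separates X T S"
  unfolding crosses_def meets_or_separates_def by blast

lemma meets_or_separates_homeomorphism:
  assumes "homeomorphism X X f f'" "S \<subseteq> X" "meets_or_separates X S T"
  shows "meets_or_separates X (f ` S) (f ` T)"
proof (cases "S \<inter> T = {}")
  case True
  then obtain w z where "w \<in> T" "z \<in> T" "separates_pts X S w z"
    using assms(3) unfolding meets_or_separates_def separates_set_def by blast
  then show ?thesis
    using separates_pts_homeomorphism[OF assms(1,2)]
    unfolding meets_or_separates_def separates_set_def by blast
qed (auto simp: meets_or_separates_def)

lemma crossing_list_iff_successively: "crossing_list X L \<longleftrightarrow> successively (crosses X) L"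
proof (induction L rule: induct_list012)
  case (3 x y zs)
  have "crossing_list X (x # y # zs) \<longleftrightarrow> crosses X x y \<and> crossing_list X (y # zs)"
    unfolding crossing_list_def by (auto simp: less_Suc_eq_0_disj)
  with 3 show ?case by simp
qed (simp_all add: crossing_list_def)

lemma crosses_commute: "crosses X S T \<longleftrightarrow> crosses X T S"
  unfolding crosses_def by blast

lemma crossing_list_rev: "crossing_list X (rev L) \<longleftrightarrow> crossing_list X L"
  unfolding crossing_list_iff_successively successively_rev
  by (rule arg_cong[where f = "\<lambda>P. successively P L"]) (auto simp: fun_eq_iff crosses_commute)

lemma locally_connected_connected_nbhd:
  assumes "locally connected X" "openin (top_of_set X) W" "x \<in> W"
  obtains \<delta> V where "\<delta> > 0" "connected V" "V \<subseteq> W" "\<And>y. y \<in> X \<Longrightarrow> dist y x < \<delta> \<Longrightarrow> y \<in> V"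
proof -
  obtain U V where UV: "openin (top_of_set X) U" "connected V" "x \<in> U" "U \<subseteq> V" "V \<subseteq> W"
    using assms unfolding locally_def by meson
  then obtain \<delta> where "\<delta> > 0" "\<And>y. y \<in> X \<Longrightarrow> dist y x < \<delta> \<Longrightarrow> y \<in> U"
    unfolding openin_euclidean_subtopology_iff by meson
  with UV that show ?thesis by blast
qed

text \<open>A connected neighbourhood of \<open>x\<close> inside \<open>ball x \<epsilon>\<close> eventually contains \<open>T i\<close>;
  if \<open>S i\<close> missed the ball it could neither meet nor separate \<open>T i\<close>.\<close>
lemma meets_or_separates_eventually_meets_ball:
  assumes lc: "locally connected X" and "x \<in> X" and T: "\<And>i. T i \<subseteq> X"
    and "sets_tendsto T x" and ms: "\<And>i. meets_or_separates X (S i) (T i)" and "\<epsilon> > 0"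
  shows "eventually (\<lambda>i. S i \<inter> ball x \<epsilon> \<noteq> {}) sequentially"
proof -
  have "openin (top_of_set X) (X \<inter> ball x \<epsilon>)" by (simp add: openin_open_Int)
  then obtain \<delta> V where "\<delta> > 0" and V: "connected V" "V \<subseteq> X \<inter> ball x \<epsilon>"
      and V_nbhd: "\<And>y. y \<in> X \<Longrightarrow> dist y x < \<delta> \<Longrightarrow> y \<in> V"
    using locally_connected_connected_nbhd[OF lc] \<open>x \<in> X\<close> \<open>\<epsilon> > 0\<close> by (metis IntI centre_in_ball)
  have "eventually (\<lambda>i. T i \<subseteq> ball x \<delta>) sequentially"
    using \<open>sets_tendsto T x\<close> \<open>\<delta> > 0\<close> unfolding sets_tendsto_def by auto
  then show ?thesis
  proof (rule eventually_mono)
    fix i assume "T i \<subseteq> ball x \<delta>"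
    then have TV: "T i \<subseteq> V" using T V_nbhd by (force simp: dist_commute)
    show "S i \<inter> ball x \<epsilon> \<noteq> {}"
    proof
      assume "S i \<inter> ball x \<epsilon> = {}"
      then have "V \<subseteq> X - S i" using V(2) by blast
      then have "\<not> separates_set X (S i) (T i)"
        using connected_componentI[OF V(1)] TV unfolding separates_set_def separates_pts_def by blast
      moreover have "S i \<inter> T i = {}" using \<open>S i \<inter> ball x \<epsilon> = {}\<close> TV V(2) by blast
      ultimately show False using ms[of i] unfolding meets_or_separates_def by blast
    qed
  qed
qed

lemma closed_mem_if_meets_or_separates_tendsto:
  assumes "locally connected X" "x \<in> X" "\<And>i. T i \<subseteq> X" "sets_tendsto T x"
    and "closed D" "\<And>i. meets_or_separates X D (T i)"
  shows "x \<in> D"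
proof -
  have "\<exists>y\<in>D. dist y x < \<epsilon>" if "\<epsilon> > 0" for \<epsilon>
    using eventually_happens'[OF trivial_limit_sequentially
        meets_or_separates_eventually_meets_ball[OF assms(1-4), of "\<lambda>_. D", OF assms(6) that]]
    by (auto simp: dist_commute)
  then show ?thesis using closed_approachable[OF \<open>closed D\<close>] by blast
qed

text \<open>Replace a separated point equal to \<open>p\<close> by a nearby point of \<open>A\<close> in the same component
  of \<open>X - S\<close>.\<close>
lemma separates_set_avoiding_limit_point:
  assumes lc: "locally connected X" and "A \<subseteq> X" "closed S" "p \<in> A" "p \<notin> S" "p islimpt A"
    and "separates_set X S A"
  obtains w z where "w \<in> A - {p}" "z \<in> A - {p}" "separates_pts X S w z"
proof -
  obtain w z where wz: "w \<in> A" "z \<in> A" "separates_pts X S w z"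
    using \<open>separates_set X S A\<close> unfolding separates_set_def by blast
  have "openin (top_of_set X) (X - S)"
    using \<open>closed S\<close> by (simp add: Diff_eq openin_open_Int open_Compl Int_commute)
  moreover have "p \<in> X - S" using assms(2,4,5) by blast
  ultimately obtain \<delta> V where "\<delta> > 0" "connected V" "V \<subseteq> X - S"
      and V_nbhd: "\<And>y. y \<in> X \<Longrightarrow> dist y p < \<delta> \<Longrightarrow> y \<in> V"
    by (rule locally_connected_connected_nbhd[OF lc]) blast
  obtain q where q: "q \<in> A" "q \<noteq> p" "dist q p < \<delta>"
    using \<open>p islimpt A\<close> \<open>\<delta> > 0\<close> islimpt_approachable by meson
  have "p \<in> V" "q \<in> V" using V_nbhd q \<open>\<delta> > 0\<close> assms(2,4) by auto
  then have "connected_component (X - S) p q"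
    by (rule connected_componentI[OF \<open>connected V\<close> \<open>V \<subseteq> X - S\<close>])
  then have to_q: "separates_pts X S q u" if "separates_pts X S p u" for u
    using that unfolding separates_pts_def by (meson connected_component_in connected_component_trans)
  have sym: "separates_pts X S u u'" if "separates_pts X S u' u" for u u'
    using that unfolding separates_pts_def by (meson connected_component_sym)
  have "w \<noteq> z" using wz(3) unfolding separates_pts_def by (metis connected_component_refl)
  then consider "w \<noteq> p" "z \<noteq> p" | "w = p" "z \<noteq> p" | "w \<noteq> p" "z = p" by blast
  then show ?thesis
  proof cases
    case 1
    then show ?thesis using wz by (intro that[of w z]) auto
  next
    case 2
    then show ?thesis using wz q to_q by (intro that[of q z]) auto
  next
    case 3
    then show ?thesis using wz q to_q sym by (intro that[of w q]) auto
  qed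
qed

lemma meets_or_separates_finite_subset:
  assumes "locally connected X" "A \<subseteq> X" "closed S" "r \<in> A" "r \<notin> S" "r islimpt A"
    and "meets_or_separates X S A"
  obtains K where "finite K" "K \<subseteq> A - {r}" "meets_or_separates X S K"
proof (cases "S \<inter> A = {}")
  case True
  then have "separates_set X S A" using assms(7) unfolding meets_or_separates_def by blast
  then obtain w z where "w \<in> A - {r}" "z \<in> A - {r}" "separates_pts X S w z"
    using separates_set_avoiding_limit_point[OF assms(1-6)] by blast
  moreover have "finite {w, z}" by simp
  ultimately show ?thesis
    using that[of "{w, z}"] unfolding meets_or_separates_def separates_set_def by blast
next
  case False
  then obtain y where "y \<in> S" "y \<in> A" by blast
  moreover have "finite {y}" by simp
  ultimately show ?thesis
    using that[of "{y}"] \<open>r \<notin> S\<close> unfolding meets_or_separates_def by blast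
qed

section \<open>Convergence sequences\<close>

lemma sets_tendsto_subseq: "strict_mono s \<Longrightarrow> sets_tendsto T x \<Longrightarrow> sets_tendsto (\<lambda>i. T (s i)) x"
  unfolding sets_tendsto_def using eventually_subseq by blast

lemma obtain_two_points_except:
  assumes "infinite Y \<or> card Y > 2"
  obtains y1 y2 where "y1 \<in> Y - {r}" "y2 \<in> Y - {r}" "y1 \<noteq> y2"
proof -
  have "\<not> Y \<subseteq> {r, y}" for y
  proof
    assume Y: "Y \<subseteq> {r, y}"
    then have "finite Y" by (rule finite_subset) simp
    have "card Y \<le> card {r, y}" using Y by (simp add: card_mono)
    also have "\<dots> \<le> 2" by (simp add: card_insert_if)
    finally show False using assms \<open>finite Y\<close> by linarith
  qed
  then show ?thesis using that by blast
qed

lemma convergence_seq_tendsto: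
  assumes "convergence_seq Y g r a" "y \<in> Y" "y \<noteq> r"
  shows "(\<lambda>i. g i y) \<longlonglongrightarrow> a"
proof -
  have "compact {y}" "{y} \<subseteq> Y - {r}" using assms(2,3) by auto
  then have "sets_tendsto (\<lambda>i. g i ` {y}) a" using assms(1) unfolding convergence_seq_def by blast
  then show ?thesis unfolding sets_tendsto_def tendsto_def by simp
qed

lemma convergence_seq_subseq:
  "convergence_seq Y g r a \<Longrightarrow> strict_mono s \<Longrightarrow> convergence_seq Y (\<lambda>i. g (s i)) r a"
  unfolding convergence_seq_def using sets_tendsto_subseq by blast

text \<open>Two points off the repeller are carried injectively towards the attractor, and at most
  one of them can land on it.\<close>
lemma convergence_seq_attractor_islimpt:
  assumes conv: "convergence_seq Y g r a" and "infinite Y \<or> card Y > 2"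
  shows "a islimpt Y"
  unfolding islimpt_approachable
proof (intro allI impI)
  fix \<epsilon> :: real assume "\<epsilon> > 0"
  obtain y1 y2 where y: "y1 \<in> Y - {r}" "y2 \<in> Y - {r}" "y1 \<noteq> y2"
    using obtain_two_points_except[OF assms(2)] by blast
  have "eventually (\<lambda>i. g i y1 \<in> ball a \<epsilon> \<and> g i y2 \<in> ball a \<epsilon>) sequentially"
    using convergence_seq_tendsto[OF conv] y \<open>\<epsilon> > 0\<close>
    by (intro eventually_conj topological_tendstoD) auto
  then obtain i where i: "g i y1 \<in> ball a \<epsilon>" "g i y2 \<in> ball a \<epsilon>"
    using eventually_happens'[OF trivial_limit_sequentially] by blast
  obtain h where h: "homeomorphism Y Y (g i) h" using conv unfolding convergence_seq_def by blast
  have "g i y1 \<noteq> g i y2"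
    using homeomorphism_apply1[OF h, of y1] homeomorphism_apply1[OF h, of y2] y by auto
  moreover have "g i y1 \<in> Y" "g i y2 \<in> Y" using homeomorphism_image1[OF h] y by auto
  ultimately show "\<exists>y\<in>Y. y \<noteq> a \<and> dist y a < \<epsilon>"
  proof (cases "g i y1 = a")
    case True
    with \<open>g i y1 \<noteq> g i y2\<close> show ?thesis
      using i(2) \<open>g i y2 \<in> Y\<close> by (intro bexI[of _ "g i y2"]) (auto simp: dist_commute)
  next
    case False
    then show ?thesis using i(1) \<open>g i y1 \<in> Y\<close> by (intro bexI[of _ "g i y1"]) (auto simp: dist_commute)
  qed
qed

lemma convergence_seq_inter_subset_repeller:
  assumes conv: "convergence_seq A g n p" and "closed E" "p \<notin> E" and "\<And>i. g i ` E \<subseteq> E"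
  shows "A \<inter> E \<subseteq> {n}"
proof
  fix y assume y: "y \<in> A \<inter> E"
  show "y \<in> {n}"
  proof (rule ccontr)
    assume "y \<notin> {n}"
    then have lim: "(\<lambda>i. g i y) \<longlonglongrightarrow> p" using y by (intro convergence_seq_tendsto[OF conv]) auto
    have "g i y \<in> E" for i using assms(4)[of i] y by blast
    then have "p \<in> E" using closed_sequentially[OF \<open>closed E\<close> _ lim] by blast
    then show False using \<open>p \<notin> E\<close> by blast
  qed
qed

lemma convergence_seqI_Stab:
  assumes "acts_by_homeos G \<phi> X" "A \<subseteq> X" "\<And>i. h i \<in> Stab G \<phi> A" "r \<in> A" "a \<in> A"
    and "\<And>K. compact K \<Longrightarrow> K \<subseteq> A - {r} \<Longrightarrow> sets_tendsto (\<lambda>i. \<phi> (h i) ` K) a"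
  shows "convergence_seq A (\<lambda>i. \<phi> (h i)) r a"
  using assms Stab_homeomorphism[OF assms(1,2,3)] unfolding convergence_seq_def by blast

text \<open>If \<open>K\<close> avoids the attractor, its complement in \<open>A\<close> is eventually carried into any
  neighbourhood \<open>U\<close> of the attractor, so the inverses carry \<open>K\<close> into \<open>U\<close>.\<close>
lemma convergence_seq_inverse:
  assumes act: "acts_by_homeos G \<phi> X" and "compact A" "A \<subseteq> X"
    and h: "\<And>i. h i \<in> Stab G \<phi> A" and conv: "convergence_seq A (\<lambda>i. \<phi> (h i)) r a"
  shows "convergence_seq A (\<lambda>i. \<phi> (inv\<^bsub>G\<^esub> (h i))) a r"
proof (rule convergence_seqI_Stab[OF act \<open>A \<subseteq> X\<close> Stab_inv_closed[OF act \<open>A \<subseteq> X\<close> h]])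
  show "a \<in> A" "r \<in> A" using conv unfolding convergence_seq_def by auto
  fix K assume K: "compact K" "K \<subseteq> A - {a}"
  show "sets_tendsto (\<lambda>i. \<phi> (inv\<^bsub>G\<^esub> (h i)) ` K) r"
    unfolding sets_tendsto_def
  proof (intro allI impI)
    fix U assume U: "open U \<and> r \<in> U"
    have "compact (A - U)" using \<open>compact A\<close> U by (simp add: compact_diff)
    moreover have "A - U \<subseteq> A - {r}" using U by blast
    ultimately have "sets_tendsto (\<lambda>i. \<phi> (h i) ` (A - U)) a"
      using conv unfolding convergence_seq_def by blast
    moreover have "open (- K)" "a \<in> - K" using K by (auto intro: compact_imp_closed)
    ultimately have "eventually (\<lambda>i. \<phi> (h i) ` (A - U) \<subseteq> - K) sequentially"
      unfolding sets_tendsto_def by blast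
    then show "eventually (\<lambda>i. \<phi> (inv\<^bsub>G\<^esub> (h i)) ` K \<subseteq> U) sequentially"
    proof (rule eventually_mono)
      fix i assume hK: "\<phi> (h i) ` (A - U) \<subseteq> - K"
      have hom: "homeomorphism A A (\<phi> (h i)) (\<phi> (inv\<^bsub>G\<^esub> (h i)))"
        using Stab_homeomorphism[OF act \<open>A \<subseteq> X\<close> h] .
      show "\<phi> (inv\<^bsub>G\<^esub> (h i)) ` K \<subseteq> U"
      proof
        fix y assume "y \<in> \<phi> (inv\<^bsub>G\<^esub> (h i)) ` K"
        then obtain k where k: "k \<in> K" "y = \<phi> (inv\<^bsub>G\<^esub> (h i)) k" by blast
        then have "y \<in> A" "\<phi> (h i) y = k"
          using K homeomorphism_image2[OF hom] homeomorphism_apply2[OF hom] by blast+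
        then show "y \<in> U" using hK k(1) by blast
      qed
    qed
  qed
qed

lemma convergence_seq_repellers_eq:
  assumes act: "acts_by_homeos G \<phi> X" and "compact A" "A \<subseteq> X" "compact B" "B \<subseteq> X"
    and f: "\<And>i. f i \<in> Stab G \<phi> A \<inter> Stab G \<phi> B"
    and "convergence_seq A (\<lambda>i. \<phi> (f i)) n p" "convergence_seq B (\<lambda>i. \<phi> (f i)) m p"
    and "y \<in> A \<inter> B" "y \<noteq> p"
  shows "n = m"
proof -
  have "convergence_seq A (\<lambda>i. \<phi> (inv\<^bsub>G\<^esub> f i)) p n"
    using convergence_seq_inverse[OF act \<open>compact A\<close> \<open>A \<subseteq> X\<close> _ assms(7)] f by blast
  moreover have "convergence_seq B (\<lambda>i. \<phi> (inv\<^bsub>G\<^esub> f i)) p m"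
    using convergence_seq_inverse[OF act \<open>compact B\<close> \<open>B \<subseteq> X\<close> _ assms(8)] f by blast
  ultimately have "(\<lambda>i. \<phi> (inv\<^bsub>G\<^esub> f i) y) \<longlonglongrightarrow> n" "(\<lambda>i. \<phi> (inv\<^bsub>G\<^esub> f i) y) \<longlonglongrightarrow> m"
    using convergence_seq_tendsto \<open>y \<in> A \<inter> B\<close> \<open>y \<noteq> p\<close> by blast+
  then show ?thesis by (rule LIMSEQ_unique)
qed

lemma convergence_seq_mult_right:
  assumes act: "acts_by_homeos G \<phi> X" and "A \<subseteq> X" and h: "\<And>i. h i \<in> Stab G \<phi> A"
    and g: "g \<in> Stab G \<phi> A" and "\<phi> g r = r" and conv: "convergence_seq A (\<lambda>i. \<phi> (h i)) r a"
  shows "convergence_seq A (\<lambda>i. \<phi> (h i \<otimes>\<^bsub>G\<^esub> g)) r a"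
proof (rule convergence_seqI_Stab[OF act \<open>A \<subseteq> X\<close> Stab_mult_closed[OF act \<open>A \<subseteq> X\<close> h g]])
  show "r \<in> A" "a \<in> A" using conv unfolding convergence_seq_def by auto
  fix K assume K: "compact K" "K \<subseteq> A - {r}"
  have hom: "homeomorphism A A (\<phi> g) (\<phi> (inv\<^bsub>G\<^esub> g))"
    using Stab_homeomorphism[OF act \<open>A \<subseteq> X\<close> g] .
  have "compact (\<phi> g ` K)"
    using compact_continuous_image[OF continuous_on_subset[OF homeomorphism_cont1[OF hom]] K(1)] K(2)
    by blast
  moreover have "\<phi> g k \<in> A - {r}" if "k \<in> K" for k
    using that K homeomorphism_image1[OF hom] homeomorphism_apply1[OF hom, of k]
      homeomorphism_apply1[OF hom, of r] \<open>r \<in> A\<close> \<open>\<phi> g r = r\<close> by auto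
  ultimately have "sets_tendsto (\<lambda>i. \<phi> (h i) ` \<phi> g ` K) a"
    using conv unfolding convergence_seq_def by blast
  moreover have "\<phi> (h i \<otimes>\<^bsub>G\<^esub> g) ` K = \<phi> (h i) ` \<phi> g ` K" for i
  proof -
    have "h i \<in> carrier G" "g \<in> carrier G" using h g unfolding Stab_def by auto
    then show ?thesis
      unfolding image_image using acts_by_homeos_mult[OF act] K(2) \<open>A \<subseteq> X\<close>
      by (intro image_cong) auto
  qed
  ultimately show "sets_tendsto (\<lambda>i. \<phi> (h i \<otimes>\<^bsub>G\<^esub> g) ` K) a" by simp
qed

section \<open>Propagation along crossing chains\<close>

lemma local_convergence_pairingD:
  assumes "local_convergence_pairing X G \<phi> \<A>"
  shows "compact X" "locally connected X" "acts_by_homeos G \<phi> X"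
    "\<And>D. D \<in> \<A> \<Longrightarrow> closed D" "\<And>D. D \<in> \<A> \<Longrightarrow> D \<subseteq> X"
    "\<And>D. D \<in> \<A> \<Longrightarrow> infinite D \<or> card D > 2"
    "\<And>g D. g \<in> carrier G \<Longrightarrow> D \<in> \<A> \<Longrightarrow> \<phi> g ` D \<in> \<A>"
    "\<And>\<epsilon>. \<epsilon> > 0 \<Longrightarrow> finite {D\<in>\<A>. diameter D > \<epsilon>}"
  using assms unfolding local_convergence_pairing_def peano_continuum_def by auto

lemma local_convergence_pairing_compact:
  "local_convergence_pairing X G \<phi> \<A> \<Longrightarrow> D \<in> \<A> \<Longrightarrow> compact D"
  using local_convergence_pairingD(1,4,5) by (metis compact_Int_closed inf.absorb_iff2)

lemma local_convergence_pairing_crossing_seq: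
  assumes "local_convergence_pairing X G \<phi> \<A>" "A \<in> \<A>" "B \<in> \<A>" "A \<inter> B = {c}" "b \<in> B - {c}"
  shows "crossing_seq_avoiding X \<A> A B {b, c}"
proof -
  have "finite (A \<inter> B) \<and> card (A \<inter> B) \<le> 2" using assms(4) by simp
  then show ?thesis using assms unfolding local_convergence_pairing_def by blast
qed

text \<open>Only finitely many members of \<open>\<A>\<close> are large, so a sequence of members that takes each
  value finitely often has diameters tending to \<open>0\<close>; as the members also meet every ball
  around \<open>x\<close> eventually, they converge to \<open>x\<close>.\<close>
lemma tendsto_or_constant_subseq:
  assumes P: "local_convergence_pairing X G \<phi> \<A>" and S: "\<And>i. S i \<in> \<A>"
    and "\<And>i. T i \<subseteq> X" "x \<in> X" "sets_tendsto T x" "\<And>i. meets_or_separates X (S i) (T i)"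
  shows "sets_tendsto S x \<or> (\<exists>(s :: nat \<Rightarrow> nat) D. strict_mono s \<and> (\<forall>i. S (s i) = D) \<and> x \<in> D)"
proof (cases "\<exists>D. infinite {i. S i = D}")
  case True
  then obtain D where "infinite {i. S i = D}" by blast
  then obtain s :: "nat \<Rightarrow> nat" where s: "strict_mono s" "\<And>i. s i \<in> {i. S i = D}"
    using infinite_enumerate by blast
  then have SD: "S (s i) = D" for i by simp
  have "D \<in> \<A>" using S[of "s 0"] SD by simp
  have "meets_or_separates X D (T (s i))" for i using assms(6)[of "s i"] SD by simp
  then have "x \<in> D"
    using closed_mem_if_meets_or_separates_tendsto[OF local_convergence_pairingD(2)[OF P] \<open>x \<in> X\<close>
        assms(3) sets_tendsto_subseq[OF s(1) \<open>sets_tendsto T x\<close>]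
        local_convergence_pairingD(4)[OF P \<open>D \<in> \<A>\<close>]] by blast
  then show ?thesis using s(1) SD by blast
next
  case False
  have bounded: "bounded (S i)" for i
    using local_convergence_pairingD(1,5)[OF P] S by (meson bounded_subset compact_imp_bounded)
  have "eventually (\<lambda>i. S i \<subseteq> U) sequentially" if U: "open U" "x \<in> U" for U
  proof -
    obtain e where "e > 0" "ball x e \<subseteq> U" using U open_contains_ball by blast
    define \<epsilon> where "\<epsilon> = e / 2"
    have "\<epsilon> > 0" using \<open>e > 0\<close> unfolding \<epsilon>_def by simp
    have "{i. diameter (S i) > \<epsilon>} \<subseteq> (\<Union>D\<in>{D\<in>\<A>. diameter D > \<epsilon>}. {i. S i = D})"
      using S by blast
    then have "finite {i. diameter (S i) > \<epsilon>}"
      using local_convergence_pairingD(8)[OF P \<open>\<epsilon> > 0\<close>] False by (meson finite_UN_I finite_subset)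
    then have "eventually (\<lambda>i. diameter (S i) \<le> \<epsilon>) sequentially"
      unfolding cofinite_eq_sequentially[symmetric] eventually_cofinite by (simp add: not_le)
    moreover have "eventually (\<lambda>i. S i \<inter> ball x \<epsilon> \<noteq> {}) sequentially"
      by (rule meets_or_separates_eventually_meets_ball[OF local_convergence_pairingD(2)[OF P]
            assms(4,3,5,6) \<open>\<epsilon> > 0\<close>])
    ultimately show ?thesis
    proof (rule eventually_elim2)
      fix i assume diam: "diameter (S i) \<le> \<epsilon>" and "S i \<inter> ball x \<epsilon> \<noteq> {}"
      then obtain y where y: "y \<in> S i" "dist x y < \<epsilon>" by auto
      have "dist x s < e" if "s \<in> S i" for s
        using diameter_bounded_bound[OF bounded y(1) that] diam y(2) dist_triangle[of x s y]
        unfolding \<epsilon>_def by linarith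
      then show "S i \<subseteq> U" using \<open>ball x e \<subseteq> U\<close> by auto
    qed
  qed
  then show ?thesis unfolding sets_tendsto_def by blast
qed

lemma tendsto_across_meets_or_separates:
  assumes P: "local_convergence_pairing X G \<phi> \<A>" and h: "\<And>i. h i \<in> carrier G"
    and "D \<in> \<A>" "K \<subseteq> X" "a \<in> X" "meets_or_separates X D K"
    and "sets_tendsto (\<lambda>i. \<phi> (h i) ` K) a"
    and no_constant: "\<And>(s :: nat \<Rightarrow> nat) E. strict_mono s \<Longrightarrow> \<forall>i. \<phi> (h (s i)) ` D = E \<Longrightarrow> a \<notin> E"
  shows "sets_tendsto (\<lambda>i. \<phi> (h i) ` D) a"
proof -
  have hom: "homeomorphism X X (\<phi> (h i)) (\<phi> (inv\<^bsub>G\<^esub> h i))" for i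
    using acts_by_homeos_homeomorphism[OF local_convergence_pairingD(3)[OF P] h] .
  have KX: "\<phi> (h i) ` K \<subseteq> X" for i
    using homeomorphism_image1[OF hom] \<open>K \<subseteq> X\<close> by blast
  have ms: "meets_or_separates X (\<phi> (h i) ` D) (\<phi> (h i) ` K)" for i
    using meets_or_separates_homeomorphism[OF hom local_convergence_pairingD(5)[OF P \<open>D \<in> \<A>\<close>]
        \<open>meets_or_separates X D K\<close>] .
  show ?thesis
    using tendsto_or_constant_subseq[OF P local_convergence_pairingD(7)[OF P h \<open>D \<in> \<A>\<close>]
        KX \<open>a \<in> X\<close> \<open>sets_tendsto (\<lambda>i. \<phi> (h i) ` K) a\<close> ms] no_constant by blast
qed

lemma attractor_mem_end_of_chain:
  assumes P: "local_convergence_pairing X G \<phi> \<A>" and h: "\<And>i. h i \<in> Stab G \<phi> C"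
    and "C \<in> \<A>" "a \<in> X" "set L \<subseteq> \<A>" "crossing_list X (L @ [C])"
    and "K \<subseteq> X" "sets_tendsto (\<lambda>i. \<phi> (h i) ` K) a" "meets_or_separates X (hd (L @ [C])) K"
    and "\<And>D (s :: nat \<Rightarrow> nat) E. D \<in> set L \<Longrightarrow> strict_mono s \<Longrightarrow> \<forall>i. \<phi> (h (s i)) ` D = E \<Longrightarrow> a \<notin> E"
  shows "a \<in> C"
  using assms(5-)
proof (induction L arbitrary: K)
  case Nil
  have hc: "h i \<in> carrier G" "\<phi> (h i) ` C = C" for i using h unfolding Stab_def by auto
  have hom: "homeomorphism X X (\<phi> (h i)) (\<phi> (inv\<^bsub>G\<^esub> h i))" for i
    using acts_by_homeos_homeomorphism[OF local_convergence_pairingD(3)[OF P] hc(1)] .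
  have "meets_or_separates X C (\<phi> (h i) ` K)" for i
    using meets_or_separates_homeomorphism[OF hom local_convergence_pairingD(5)[OF P \<open>C \<in> \<A>\<close>]]
      Nil.prems(5) hc(2) by simp
  moreover have "\<phi> (h i) ` K \<subseteq> X" for i using homeomorphism_image1[OF hom] Nil.prems(3) by blast
  ultimately show ?case
    using closed_mem_if_meets_or_separates_tendsto[OF local_convergence_pairingD(2)[OF P] \<open>a \<in> X\<close>
        _ Nil.prems(4) local_convergence_pairingD(4)[OF P \<open>C \<in> \<A>\<close>]] by blast
next
  case (Cons D L)
  have "D \<in> \<A>" "set L \<subseteq> \<A>" using Cons.prems(1) by auto
  have hc: "h i \<in> carrier G" for i using h unfolding Stab_def by blast
  have "meets_or_separates X D K" using Cons.prems(5) by simp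
  then have tendsto_D: "sets_tendsto (\<lambda>i. \<phi> (h i) ` D) a"
    by (rule tendsto_across_meets_or_separates[OF P hc \<open>D \<in> \<A>\<close> Cons.prems(3) \<open>a \<in> X\<close> _
          Cons.prems(4)]) (meson Cons.prems(6) list.set_intros(1))
  have cross: "crosses X D (hd (L @ [C]))" and chain: "crossing_list X (L @ [C])"
    using Cons.prems(2) by (simp_all add: crossing_list_iff_successively successively_Cons)
  show ?case
  proof (rule Cons.IH[OF \<open>set L \<subseteq> \<A>\<close> chain _ tendsto_D])
    show "D \<subseteq> X" using local_convergence_pairingD(5)[OF P \<open>D \<in> \<A>\<close>] .
    show "meets_or_separates X (hd (L @ [C])) D" using crosses_meets_or_separates[OF cross] .
  qed (meson Cons.prems(6) list.set_intros(2))
qed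

lemma attractor_mem_end_of_crossing_chain:
  assumes P: "local_convergence_pairing X G \<phi> \<A>" and "A \<in> \<A>" "C \<in> \<A>"
    and h: "\<And>i. h i \<in> Stab G \<phi> A \<inter> Stab G \<phi> C"
    and conv: "convergence_seq A (\<lambda>i. \<phi> (h i)) r a" and "r islimpt A"
    and "L \<noteq> []" "set L \<subseteq> \<A>" "\<forall>D\<in>set L. r \<notin> D" "crossing_list X (A # L @ [C])"
    and no_constant: "\<And>D (s :: nat \<Rightarrow> nat) E. D \<in> set L \<Longrightarrow> strict_mono s \<Longrightarrow>
      \<forall>i. \<phi> (h (s i)) ` D = E \<Longrightarrow> a \<notin> E"
  shows "a \<in> C"
proof -
  have AX: "A \<subseteq> X" using local_convergence_pairingD(5)[OF P \<open>A \<in> \<A>\<close>] .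
  have "r \<in> A" "a \<in> A" using conv unfolding convergence_seq_def by auto
  obtain D L' where L: "L = D # L'" using \<open>L \<noteq> []\<close> by (meson neq_Nil_conv)
  have cross: "crosses X A D" and chain: "crossing_list X (L @ [C])"
    using \<open>crossing_list X (A # L @ [C])\<close> L by (simp_all add: crossing_list_iff_successively)
  have "D \<in> \<A>" "r \<notin> D" using L \<open>set L \<subseteq> \<A>\<close> \<open>\<forall>D\<in>set L. r \<notin> D\<close> by auto
  then obtain K where K: "finite K" "K \<subseteq> A - {r}" "meets_or_separates X D K"
    using meets_or_separates_finite_subset[OF local_convergence_pairingD(2)[OF P] AX
        local_convergence_pairingD(4)[OF P] \<open>r \<in> A\<close> _ \<open>r islimpt A\<close>
        crosses_meets_or_separates[OF cross]] by blast
  have tendsto_K: "sets_tendsto (\<lambda>i. \<phi> (h i) ` K) a"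
    using conv K(1,2) finite_imp_compact unfolding convergence_seq_def by blast
  have "K \<subseteq> X" "a \<in> X" using K(2) \<open>a \<in> A\<close> AX by auto
  have "h i \<in> Stab G \<phi> C" for i using h by blast
  then show ?thesis
  proof (rule attractor_mem_end_of_chain[OF P _ \<open>C \<in> \<A>\<close> \<open>a \<in> X\<close> \<open>set L \<subseteq> \<A>\<close> chain
        \<open>K \<subseteq> X\<close> tendsto_K])
    show "meets_or_separates X (hd (L @ [C])) K" using K(3) L by simp
  qed (rule no_constant)
qed

text \<open>Run the chain from \<open>A\<close> back to \<open>E\<close>: no image of a chain member contains the fixed
  point \<open>p\<close>, so the attractor \<open>p\<close> reaches \<open>E\<close>, against \<open>A \<inter> E = {n}\<close>.\<close>
lemma convergence_seq_attractor_eq_repeller: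
  assumes P: "local_convergence_pairing X G \<phi> \<A>" and "A \<in> \<A>" "E \<in> \<A>" "A \<inter> E = {n}"
    and v: "\<And>i. v i \<in> Stab G \<phi> A \<inter> Stab G \<phi> E" and fix_p: "\<And>i. \<phi> (v i) p = p"
    and conv: "convergence_seq A (\<lambda>i. \<phi> (v i)) n p"
  shows "p = n"
proof (rule ccontr)
  assume "p \<noteq> n"
  note act = local_convergence_pairingD(3)[OF P]
  have AX: "A \<subseteq> X" using local_convergence_pairingD(5)[OF P \<open>A \<in> \<A>\<close>] .
  have "p \<in> A" using conv unfolding convergence_seq_def by blast
  then have "p \<notin> E" "p \<in> X" using \<open>A \<inter> E = {n}\<close> \<open>p \<noteq> n\<close> AX by auto
  have vA: "v i \<in> Stab G \<phi> A" for i using v by blast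
  have "n islimpt A"
    using convergence_seq_attractor_islimpt[OF convergence_seq_inverse[OF act
          local_convergence_pairing_compact[OF P \<open>A \<in> \<A>\<close>] AX vA conv]
        local_convergence_pairingD(6)[OF P \<open>A \<in> \<A>\<close>]] .
  have "E \<inter> A = {n}" using \<open>A \<inter> E = {n}\<close> by (simp add: Int_commute)
  moreover have "p \<in> A - {n}" using \<open>p \<in> A\<close> \<open>p \<noteq> n\<close> by blast
  ultimately have "crossing_seq_avoiding X \<A> E A {p, n}"
    by (rule local_convergence_pairing_crossing_seq[OF P \<open>E \<in> \<A>\<close> \<open>A \<in> \<A>\<close>])
  then obtain L where L: "L \<noteq> []" "set L \<subseteq> \<A>" "\<forall>D\<in>set L. D \<inter> {p, n} = {}"
    "crossing_list X (E # L @ [A])"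
    unfolding crossing_seq_avoiding_def by blast
  have chain: "crossing_list X (A # rev L @ [E])"
    using crossing_list_rev[of X "E # L @ [A]"] L(4) by simp
  have "p \<notin> F" if "D \<in> set (rev L)" "\<forall>i. \<phi> (v (s i)) ` D = F"
    for D and s :: "nat \<Rightarrow> nat" and F
  proof -
    have "D \<subseteq> X" "p \<notin> D" using L(2,3) that(1) local_convergence_pairingD(5)[OF P] by auto
    moreover have "v (s 0) \<in> carrier G" using v unfolding Stab_def by blast
    ultimately show ?thesis
      using acts_by_homeos_fixed_notin_image[OF act _ _ \<open>p \<in> X\<close> fix_p] that(2) by metis
  qed
  then have "p \<in> E"
    using attractor_mem_end_of_crossing_chain[OF P \<open>A \<in> \<A>\<close> \<open>E \<in> \<A>\<close> v conv \<open>n islimpt A\<close> _ _ _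
        chain] L(1-3) by auto
  then show False using \<open>p \<notin> E\<close> by blast
qed

lemma stabilising_seq_of_constant_images:
  fixes s :: "nat \<Rightarrow> nat"
  assumes act: "acts_by_homeos G \<phi> X" and AX: "A \<subseteq> X" and DX: "D \<subseteq> X"
    and g: "\<And>i. g i \<in> Stab G \<phi> A" and fix_p: "\<And>i. \<phi> (g i) p = p"
    and conv: "convergence_seq A (\<lambda>i. \<phi> (g i)) p n"
    and "strict_mono s" and E: "\<And>i. \<phi> (g (s i)) ` D = E"
  obtains w where "\<And>i. w i \<in> Stab G \<phi> A \<inter> Stab G \<phi> E" "\<And>i. \<phi> (w i) p = p"
    "convergence_seq A (\<lambda>i. \<phi> (w i)) p n"
proof -
  have gc: "g i \<in> carrier G" for i using g unfolding Stab_def by blast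
  have "p \<in> X" using conv AX unfolding convergence_seq_def by blast
  have EX: "E \<subseteq> X" using homeomorphism_image1[OF acts_by_homeos_homeomorphism[OF act gc]] DX E by blast
  define g\<^sub>0 where "g\<^sub>0 = inv\<^bsub>G\<^esub> g (s 0)"
  have g\<^sub>0: "g\<^sub>0 \<in> Stab G \<phi> A" "\<phi> g\<^sub>0 p = p" "\<phi> g\<^sub>0 ` E = D"
    unfolding g\<^sub>0_def
    using Stab_inv_closed[OF act AX g] acts_by_homeos_inv_fixed[OF act gc \<open>p \<in> X\<close> fix_p]
      acts_by_homeos_inv_image[OF act gc DX] E by metis+
  define w where "w i = g (s i) \<otimes>\<^bsub>G\<^esub> g\<^sub>0" for i
  have w_apply: "\<phi> (w i) x = \<phi> (g (s i)) (\<phi> g\<^sub>0 x)" if "x \<in> X" for i x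
    using acts_by_homeos_mult[OF act gc _ that] g\<^sub>0(1) unfolding w_def Stab_def by blast
  have "\<phi> (w i) ` E = E" for i
  proof -
    have "\<phi> (w i) ` E = \<phi> (g (s i)) ` \<phi> g\<^sub>0 ` E"
      unfolding image_image using w_apply EX by (intro image_cong) auto
    then show ?thesis using g\<^sub>0(3) E by simp
  qed
  then have "w i \<in> Stab G \<phi> A \<inter> Stab G \<phi> E" "\<phi> (w i) p = p" for i
    using Stab_mult_closed[OF act AX g g\<^sub>0(1)] w_apply[OF \<open>p \<in> X\<close>] g\<^sub>0(2) fix_p
    unfolding w_def Stab_def by auto
  moreover have "convergence_seq A (\<lambda>i. \<phi> (w i)) p n"
    unfolding w_def using convergence_seq_mult_right[OF act AX g g\<^sub>0(1,2)
        convergence_seq_subseq[OF conv \<open>strict_mono s\<close>]] .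
  ultimately show ?thesis using that by blast
qed

text \<open>If \<open>n \<in> E\<close>, the inverses of the renormalised sequence have repeller \<open>n \<in> E\<close> and
  attractor \<open>p \<notin> E\<close>, which forces \<open>A \<inter> E = {n}\<close>; then
  \<open>convergence_seq_attractor_eq_repeller\<close> gives \<open>p = n\<close>.\<close>
lemma constant_images_avoid_attractor:
  fixes s :: "nat \<Rightarrow> nat"
  assumes P: "local_convergence_pairing X G \<phi> \<A>" and "A \<in> \<A>" "D \<in> \<A>" "p \<notin> D"
    and g: "\<And>i. g i \<in> Stab G \<phi> A" and fix_p: "\<And>i. \<phi> (g i) p = p"
    and conv: "convergence_seq A (\<lambda>i. \<phi> (g i)) p n"
    and "strict_mono s" and E: "\<And>i. \<phi> (g (s i)) ` D = E"
  shows "n \<notin> E"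
proof
  assume "n \<in> E"
  note act = local_convergence_pairingD(3)[OF P]
  have AX: "A \<subseteq> X" and DX: "D \<subseteq> X" using local_convergence_pairingD(5)[OF P] assms(2,3) by auto
  have gc: "g i \<in> carrier G" for i using g unfolding Stab_def by blast
  have "p \<in> X" using conv AX unfolding convergence_seq_def by blast
  have "E \<in> \<A>" using local_convergence_pairingD(7)[OF P gc \<open>D \<in> \<A>\<close>] E by metis
  then have EX: "E \<subseteq> X" using local_convergence_pairingD(5)[OF P] by blast
  have "p \<notin> E"
    using acts_by_homeos_fixed_notin_image[OF act gc DX \<open>p \<in> X\<close> fix_p \<open>p \<notin> D\<close>] E by metis
  obtain w where w: "\<And>i. w i \<in> Stab G \<phi> A \<inter> Stab G \<phi> E" "\<And>i. \<phi> (w i) p = p"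
    and conv_w: "convergence_seq A (\<lambda>i. \<phi> (w i)) p n"
    using stabilising_seq_of_constant_images[OF act AX DX g fix_p conv \<open>strict_mono s\<close> E] by blast
  have conv_v: "convergence_seq A (\<lambda>i. \<phi> (inv\<^bsub>G\<^esub> w i)) n p"
    using convergence_seq_inverse[OF act local_convergence_pairing_compact[OF P \<open>A \<in> \<A>\<close>] AX _ conv_w]
      w(1) by blast
  have v: "inv\<^bsub>G\<^esub> w i \<in> Stab G \<phi> A \<inter> Stab G \<phi> E" "\<phi> (inv\<^bsub>G\<^esub> w i) p = p" for i
    using Stab_inv_closed[OF act AX] Stab_inv_closed[OF act EX] w
      acts_by_homeos_inv_fixed[OF act _ \<open>p \<in> X\<close>] unfolding Stab_def by auto
  have "\<phi> (inv\<^bsub>G\<^esub> w i) ` E \<subseteq> E" for i using v(1)[of i] unfolding Stab_def by blast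
  then have "A \<inter> E \<subseteq> {n}"
    by (rule convergence_seq_inter_subset_repeller[OF conv_v
          local_convergence_pairingD(4)[OF P \<open>E \<in> \<A>\<close>] \<open>p \<notin> E\<close>])
  moreover have "n \<in> A" using conv unfolding convergence_seq_def by blast
  ultimately have "A \<inter> E = {n}" using \<open>n \<in> E\<close> by blast
  then have "p = n"
    by (rule convergence_seq_attractor_eq_repeller[OF P \<open>A \<in> \<A>\<close> \<open>E \<in> \<A>\<close> _ v conv_v])
  then show False using \<open>n \<in> E\<close> \<open>p \<notin> E\<close> by blast
qed

lemma repeller_mem_if_inter_eq_attractor:
  assumes P: "local_convergence_pairing X G \<phi> \<A>" and "A \<in> \<A>" "B \<in> \<A>" "A \<inter> B = {p}"
    and f: "\<And>i. f i \<in> Stab G \<phi> A \<inter> Stab G \<phi> B"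
    and conv: "convergence_seq A (\<lambda>i. \<phi> (f i)) n p"
  shows "n \<in> B"
proof -
  note act = local_convergence_pairingD(3)[OF P]
  have AX: "A \<subseteq> X" and BX: "B \<subseteq> X" using local_convergence_pairingD(5)[OF P] assms(2,3) by auto
  have fc: "f i \<in> carrier G" and fA: "f i \<in> Stab G \<phi> A" for i using f unfolding Stab_def by auto
  have "p \<in> X" using \<open>A \<inter> B = {p}\<close> AX by blast
  have fix_p: "\<phi> (f i) p = p" for i
  proof -
    have "\<phi> (f i) p \<in> A \<inter> B" using f[of i] \<open>A \<inter> B = {p}\<close> unfolding Stab_def by blast
    then show ?thesis using \<open>A \<inter> B = {p}\<close> by blast
  qed
  define g where "g i = inv\<^bsub>G\<^esub> f i" for i
  have g: "g i \<in> Stab G \<phi> A \<inter> Stab G \<phi> B" "\<phi> (g i) p = p" for i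
    unfolding g_def using Stab_inv_closed[OF act AX] Stab_inv_closed[OF act BX] f
      acts_by_homeos_inv_fixed[OF act fc \<open>p \<in> X\<close> fix_p] by auto
  have conv_g: "convergence_seq A (\<lambda>i. \<phi> (g i)) p n"
    unfolding g_def
    using convergence_seq_inverse[OF act local_convergence_pairing_compact[OF P \<open>A \<in> \<A>\<close>] AX fA conv] .
  have "p islimpt A"
    using convergence_seq_attractor_islimpt[OF conv local_convergence_pairingD(6)[OF P \<open>A \<in> \<A>\<close>]] .
  obtain b where "b \<in> B - {p}"
    using obtain_two_points_except[OF local_convergence_pairingD(6)[OF P \<open>B \<in> \<A>\<close>]] by blast
  then obtain L where L: "L \<noteq> []" "set L \<subseteq> \<A>" "\<forall>D\<in>set L. D \<inter> {b, p} = {}"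
    "crossing_list X (A # L @ [B])"
    using local_convergence_pairing_crossing_seq[OF P \<open>A \<in> \<A>\<close> \<open>B \<in> \<A>\<close> \<open>A \<inter> B = {p}\<close>]
    unfolding crossing_seq_avoiding_def by blast
  have gA: "g i \<in> Stab G \<phi> A" for i using g(1) by blast
  have "n \<notin> E" if "D \<in> set L" "strict_mono s" "\<forall>i. \<phi> (g (s i)) ` D = E"
    for D and s :: "nat \<Rightarrow> nat" and E
  proof (rule constant_images_avoid_attractor[OF P \<open>A \<in> \<A>\<close> _ _ gA g(2) conv_g \<open>strict_mono s\<close>])
    show "D \<in> \<A>" "p \<notin> D" using L(2,3) that(1) by auto
    show "\<phi> (g (s i)) ` D = E" for i using that(3) by blast
  qed
  moreover have "\<forall>D\<in>set L. p \<notin> D" using L(3) by blast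
  ultimately show ?thesis
    using attractor_mem_end_of_crossing_chain[OF P \<open>A \<in> \<A>\<close> \<open>B \<in> \<A>\<close> g(1) conv_g \<open>p islimpt A\<close>
        L(1,2) _ L(4)] by blast
qed

theorem lemma4p6:
  fixes X :: "'a::metric_space set" and G :: "('g, 'c) monoid_scheme"
    and \<phi> :: "'g \<Rightarrow> 'a \<Rightarrow> 'a" and \<A> :: "'a set set"
    and f :: "nat \<Rightarrow> 'g" and A B :: "'a set" and n p :: 'a
  assumes "local_convergence_pairing X G \<phi> \<A>"
    and "A \<in> \<A>" and "B \<in> \<A>"
    and "\<forall>i. f i \<in> Stab G \<phi> A \<inter> Stab G \<phi> B"
    and "convergence_seq A (\<lambda>i. \<phi> (f i)) n p"
    and "\<exists>m. convergence_seq B (\<lambda>i. \<phi> (f i)) m p"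
  shows "convergence_seq B (\<lambda>i. \<phi> (f i)) n p"
proof -
  note P = assms(1) and conv_A = assms(5)
  obtain m where conv_B: "convergence_seq B (\<lambda>i. \<phi> (f i)) m p" using assms(6) by blast
  have f_AB: "f i \<in> Stab G \<phi> A \<inter> Stab G \<phi> B" and f_BA: "f i \<in> Stab G \<phi> B \<inter> Stab G \<phi> A" for i
    using assms(4) by auto
  have "n = m"
  proof (cases "A \<inter> B = {p}")
    case True
    have "n \<in> A" "m \<in> B" using conv_A conv_B unfolding convergence_seq_def by auto
    moreover have "n \<in> B"
      using repeller_mem_if_inter_eq_attractor[OF P assms(2,3) True f_AB conv_A] .
    moreover have "m \<in> A"
      using repeller_mem_if_inter_eq_attractor[OF P assms(3,2) _ f_BA conv_B] True by (simp add: Int_commute)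
    ultimately have "n \<in> A \<inter> B" "m \<in> A \<inter> B" by auto
    then show ?thesis using True by simp
  next
    case False
    have "p \<in> A \<inter> B" using conv_A conv_B unfolding convergence_seq_def by auto
    with False obtain y where "y \<in> A \<inter> B" "y \<noteq> p" by blast
    then show ?thesis
      using convergence_seq_repellers_eq[OF local_convergence_pairingD(3)[OF P]
          local_convergence_pairing_compact[OF P assms(2)] local_convergence_pairingD(5)[OF P assms(2)]
          local_convergence_pairing_compact[OF P assms(3)] local_convergence_pairingD(5)[OF P assms(3)]
          f_AB conv_A conv_B] by blast
  qed
  then show ?thesis using conv_B by simp
qed

end
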